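(* Let $G=(V,E)$ be a finite graph and let $(G_n)_{n\in\mathbb{N}}$ be a sequence with $G_0=G$, $G_n$ a $2$-lift of $G_{n-1}$, and covering maps $\pi_n:G_n\to G$, such that for every $v\in V$ and every $v_n\in\pi_n^{-1}(v)$, $(G_n,v_n)\to(T(G),v)$ in $\mathcal{G}_\star$. Then $G_n$ converges in the local weak sense to $(T(G),o)$, where $o$ is the root of $T(G)$ corresponding to a uniformly random vertex $v$ of $G$.
   Context: A $2$-lift of $G$ has vertex set $V\times\{0,1\}$ with each edge $(u,v)$ replaced either by $((u,0),(v,0)),((u,1),(v,1))$ or by $((u,0),(v,1)),((u,1),(v,0))$. $(T(G),v)$ is the tree of finite non-backtracking walks in $G$ from $v$. $\mathcal{G}_\star$ is the space of locally finite connected rooted graphs up to rooted isomorphism with distance $1/(1+r)$, $r$ the largest radius at which the balls around the roots are rooted-isomorphic. For a finite graph $H$, $\mathcal{U}(H)$ is the law on $\mathcal{G}_\star$ of $H$ restricted to the component of a uniformly random root; $H_n$ converges in the local weak sense to a random rooted graph $(T,o)$ if $\mathcal{U}(H_n)$ converges weakly to the law of $(T,o)$. *)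

theory Defs
  imports "HOL-Probability.Probability" "HOL-Library.Countable"
begin

type_synonym 'a ugraph = "'a set \<times> ('a \<Rightarrow> 'a \<Rightarrow> bool)"

definition simple_graph :: "'a ugraph \<Rightarrow> bool" where
  "simple_graph G \<longleftrightarrow>
     (\<forall>x y. snd G x y \<longrightarrow> x \<in> fst G \<and> y \<in> fst G) \<and>
     (\<forall>x y. snd G x y \<longrightarrow> snd G y x) \<and>
     (\<forall>x. \<not> snd G x x)"

definition locally_finite :: "'a ugraph \<Rightarrow> bool" where
  "locally_finite G \<longleftrightarrow> (\<forall>x \<in> fst G. finite {y. snd G x y})"

fun ball_set :: "'a ugraph \<Rightarrow> 'a \<Rightarrow> nat \<Rightarrow> 'a set" where
  "ball_set G rt 0 = {rt}"
| "ball_set G rt (Suc r) = ball_set G rt r \<union> {y. \<exists>x \<in> ball_set G rt r. snd G x y}"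

definition induced :: "'a ugraph \<Rightarrow> 'a set \<Rightarrow> 'a ugraph" where
  "induced G S = (S \<inter> fst G, \<lambda>x y. x \<in> S \<and> y \<in> S \<and> snd G x y)"

definition ball :: "'a ugraph \<Rightarrow> 'a \<Rightarrow> nat \<Rightarrow> 'a ugraph" where
  "ball G rt r = induced G (ball_set G rt r)"

definition comp_set :: "'a ugraph \<Rightarrow> 'a \<Rightarrow> 'a set" where
  "comp_set G rt = (\<Union>r. ball_set G rt r)"

definition component :: "'a ugraph \<Rightarrow> 'a \<Rightarrow> 'a ugraph" where
  "component G rt = induced G (comp_set G rt)"

definition rooted_iso :: "'a ugraph \<Rightarrow> 'a \<Rightarrow> 'b ugraph \<Rightarrow> 'b \<Rightarrow> bool" where
  "rooted_iso G rt H rt' \<longleftrightarrow>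
     (\<exists>f. bij_betw f (fst G) (fst H) \<and> f rt = rt' \<and>
          (\<forall>x \<in> fst G. \<forall>y \<in> fst G. snd G x y \<longleftrightarrow> snd H (f x) (f y)))"

definition balls_iso :: "'a ugraph \<Rightarrow> 'a \<Rightarrow> 'b ugraph \<Rightarrow> 'b \<Rightarrow> nat \<Rightarrow> bool" where
  "balls_iso G rt H rt' r \<longleftrightarrow> rooted_iso (ball G rt r) rt (ball H rt' r) rt'"

definition rdist :: "'a ugraph \<Rightarrow> 'a \<Rightarrow> 'b ugraph \<Rightarrow> 'b \<Rightarrow> real" where
  "rdist G rt H rt' =
     (if \<forall>r. balls_iso G rt H rt' r then 0
      else 1 / (1 + real (GREATEST r. balls_iso G rt H rt' r)))"

text \<open>Every locally finite connected rooted graph is countable, so has a representative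
  with vertices in nat; elements of G_star are represented by such rooted graphs,
  functions on G_star by rooted-isomorphism-invariant functions on them.\<close>
definition Gstar :: "(nat ugraph \<times> nat) set" where
  "Gstar = {(H, rt). simple_graph H \<and> locally_finite H \<and> rt \<in> fst H \<and> fst H = comp_set H rt}"

definition bounded_continuous_Gstar :: "(nat ugraph \<times> nat \<Rightarrow> real) \<Rightarrow> bool" where
  "bounded_continuous_Gstar f \<longleftrightarrow>
     (\<exists>B. \<forall>x \<in> Gstar. \<bar>f x\<bar> \<le> B) \<and>
     (\<forall>(H, rt) \<in> Gstar. \<forall>(H', rt') \<in> Gstar. rooted_iso H rt H' rt' \<longrightarrow> f (H, rt) = f (H', rt')) \<and>
     (\<forall>(H, rt) \<in> Gstar. \<forall>e > 0. \<exists>d > 0. \<forall>(H', rt') \<in> Gstar.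
         rdist H rt H' rt' < d \<longrightarrow> \<bar>f (H, rt) - f (H', rt')\<bar> < e)"

definition map_graph :: "('a \<Rightarrow> 'b) \<Rightarrow> 'a ugraph \<Rightarrow> 'b ugraph" where
  "map_graph g G = (g ` fst G, \<lambda>x y. \<exists>a \<in> fst G. \<exists>b \<in> fst G. g a = x \<and> g b = y \<and> snd G a b)"

definition rep :: "'a::countable ugraph \<Rightarrow> 'a \<Rightarrow> nat ugraph \<times> nat" where
  "rep G rt = (map_graph to_nat (component G rt), to_nat rt)"

definition U_law :: "'a::countable ugraph \<Rightarrow> (nat ugraph \<times> nat) pmf" where
  "U_law H = map_pmf (rep H) (pmf_of_set (fst H))"

definition local_weak_conv :: "(nat \<Rightarrow> 'a::countable ugraph) \<Rightarrow> (nat ugraph \<times> nat) pmf \<Rightarrow> bool" where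
  "local_weak_conv Hs \<mu> \<longleftrightarrow>
     (\<forall>f. bounded_continuous_Gstar f \<longrightarrow>
        (\<lambda>n. measure_pmf.expectation (U_law (Hs n)) f) \<longlonglongrightarrow> measure_pmf.expectation \<mu> f)"

definition nb_walk :: "'v ugraph \<Rightarrow> 'v \<Rightarrow> 'v list \<Rightarrow> bool" where
  "nb_walk G v w \<longleftrightarrow> v \<in> fst G \<and> w \<noteq> [] \<and> hd w = v \<and>
     (\<forall>i. Suc i < length w \<longrightarrow> snd G (w ! i) (w ! Suc i)) \<and>
     (\<forall>i. Suc (Suc i) < length w \<longrightarrow> w ! Suc (Suc i) \<noteq> w ! i)"

text \<open>T(G) rooted at v: vertices are the finite non-backtracking walks from v
  (vertex lists), root the trivial walk [v], edges extend a walk by one step.\<close>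
definition nb_tree :: "'v ugraph \<Rightarrow> 'v \<Rightarrow> 'v list ugraph" where
  "nb_tree G v = ({w. nb_walk G v w},
     \<lambda>p q. nb_walk G v p \<and> nb_walk G v q \<and> ((\<exists>x. q = p @ [x]) \<or> (\<exists>x. p = q @ [x])))"

section \<open>2-lifts, with vertices of G_n encoded as (v, b_n ... b_1) :: 'v \<times> bool list\<close>

definition base_graph :: "'v ugraph \<Rightarrow> ('v \<times> bool list) ugraph" where
  "base_graph G = ((\<lambda>v. (v, [])) ` fst G,
     \<lambda>p q. snd p = [] \<and> snd q = [] \<and> fst p \<in> fst G \<and> fst q \<in> fst G \<and> snd G (fst p) (fst q))"

definition lift_vertex :: "'v \<times> bool list \<Rightarrow> bool \<Rightarrow> 'v \<times> bool list" where
  "lift_vertex x b = (fst x, b # snd x)"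

definition unlift :: "'v \<times> bool list \<Rightarrow> 'v \<times> bool list" where
  "unlift p = (fst p, tl (snd p))"

text \<open>H' is a 2-lift of H: the sign s x y = s y x says whether edge (x,y) is crossed.\<close>
definition two_lift :: "('v \<times> bool list) ugraph \<Rightarrow> ('v \<times> bool list) ugraph \<Rightarrow> bool" where
  "two_lift H H' \<longleftrightarrow> (\<exists>s. (\<forall>x y. s x y = s y x) \<and>
     H' = ({lift_vertex x b | x b. x \<in> fst H},
           \<lambda>p q. p \<in> {lift_vertex x b | x b. x \<in> fst H} \<and>
                 q \<in> {lift_vertex x b | x b. x \<in> fst H} \<and>
                 snd H (unlift p) (unlift q) \<and>
                 (hd (snd q) = (hd (snd p) \<noteq> s (unlift p) (unlift q)))))"

end

theory Submission
  imports Defs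
begin

text \<open>
  Every vertex of \<open>G\<^sub>n\<close> is a pair \<open>(v, bs)\<close> with \<open>v \<in> V\<close> and \<open>bs\<close> a bit string of length \<open>n\<close>,
  so \<open>U(G\<^sub>n)\<close> is the average over \<open>V\<close> of the averages over the fibres above each \<open>v\<close>.
  For a bounded continuous \<open>f\<close> on \<open>\<G>\<^sub>\<star>\<close>, the hypothesis applied to an adversarially chosen
  vertex in each fibre shows that \<open>f(G\<^sub>n, (v, bs))\<close> converges to \<open>f(T(G), v)\<close> uniformly in \<open>bs\<close>.
  As \<open>V\<close> is finite, the averages converge to the average of \<open>f(T(G), v)\<close> over \<open>v \<in> V\<close>.
\<close>

definition edges_in :: "'a ugraph \<Rightarrow> bool" where
  "edges_in H \<longleftrightarrow> (\<forall>x y. snd H x y \<longrightarrow> x \<in> fst H \<and> y \<in> fst H)"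

lemma simple_graph_imp_edges_in: "simple_graph A \<Longrightarrow> edges_in A"
  by (simp add: simple_graph_def edges_in_def)

lemma edges_in_component: "edges_in A \<Longrightarrow> edges_in (component A a)"
  by (auto simp: edges_in_def component_def induced_def)

lemma locally_finite_if_finite: "edges_in A \<Longrightarrow> finite (fst A) \<Longrightarrow> locally_finite A"
  unfolding locally_finite_def edges_in_def
  by (metis (no_types, lifting) finite_subset mem_Collect_eq subsetI)

lemma root_in_ball_set: "rt \<in> ball_set G rt r"
  by (induction r) auto

lemma root_in_ball: "a \<in> fst A \<Longrightarrow> a \<in> fst (ball A a r)"
  by (simp add: ball_def induced_def root_in_ball_set)

lemma ball_set_subset_comp_set: "ball_set G rt r \<subseteq> comp_set G rt"
  unfolding comp_set_def by blast

lemma comp_set_closed: "x \<in> ball_set G rt r \<Longrightarrow> snd G x y \<Longrightarrow> y \<in> comp_set G rt"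
  unfolding comp_set_def by (rule UN_I[of "Suc r"]) auto

lemma comp_set_subset: "edges_in G \<Longrightarrow> rt \<in> fst G \<Longrightarrow> comp_set G rt \<subseteq> fst G"
proof -
  assume "edges_in G" "rt \<in> fst G"
  then have "ball_set G rt r \<subseteq> fst G" for r
    by (induction r) (auto simp: edges_in_def)
  then show ?thesis unfolding comp_set_def by blast
qed

lemma ball_set_component: "ball_set (component G rt) rt r = ball_set G rt r"
proof (induction r)
  case (Suc r)
  have "{y. \<exists>x \<in> ball_set G rt r. snd (component G rt) x y} = {y. \<exists>x \<in> ball_set G rt r. snd G x y}"
    using ball_set_subset_comp_set[of G rt r] comp_set_closed[of _ G rt r]
    by (auto simp: component_def induced_def)
  then show ?case using Suc by simp
qed simp

lemma ball_component: "ball (component G rt) rt r = ball G rt r"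
  unfolding ball_def ball_set_component
  using ball_set_subset_comp_set[of G rt r]
  by (auto simp: component_def induced_def fun_eq_iff)

lemma comp_set_component: "comp_set (component G rt) rt = comp_set G rt"
  by (simp add: comp_set_def ball_set_component)

lemma ball_set_map_graph:
  assumes "inj g" "edges_in H"
  shows "ball_set (map_graph g H) (g a) r = g ` ball_set H a r"
proof (induction r)
  case (Suc r)
  have "{y. \<exists>x \<in> g ` ball_set H a r. snd (map_graph g H) x y} = g ` {y. \<exists>x \<in> ball_set H a r. snd H x y}"
    using assms by (auto simp: map_graph_def edges_in_def inj_eq)
  then show ?case using Suc by (simp add: image_Un)
qed simp

lemma ball_map_graph:
  assumes "inj g" "edges_in H"
  shows "ball (map_graph g H) (g a) r = map_graph g (ball H a r)"
  using assms unfolding ball_def ball_set_map_graph[OF assms]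
  by (auto simp: induced_def map_graph_def inj_eq edges_in_def fun_eq_iff)

lemma snd_rep: "snd (rep A a) = to_nat a"
  by (simp add: rep_def)

lemma ball_rep:
  assumes "edges_in A"
  shows "ball (fst (rep A a)) (to_nat a) r = map_graph to_nat (ball A a r)"
  unfolding rep_def fst_conv
  by (simp add: ball_map_graph[OF inj_to_nat edges_in_component[OF assms]] ball_component)

lemma rooted_iso_map_graph: "inj g \<Longrightarrow> rooted_iso K a (map_graph g K) (g a)"
  unfolding rooted_iso_def
  by (rule exI[of _ g]) (auto simp: map_graph_def inj_eq bij_betw_def intro: inj_on_subset)

lemma rooted_iso_sym:
  assumes "rooted_iso G a H b" "a \<in> fst G"
  shows "rooted_iso H b G a"
proof -
  obtain f where f: "bij_betw f (fst G) (fst H)" "f a = b"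
    "\<forall>x \<in> fst G. \<forall>y \<in> fst G. snd G x y \<longleftrightarrow> snd H (f x) (f y)"
    using assms(1) unfolding rooted_iso_def by blast
  define h where "h = inv_into (fst G) f"
  have h_bij: "bij_betw h (fst H) (fst G)"
    unfolding h_def using f(1) by (rule bij_betw_inv_into)
  have h_root: "h b = a"
    unfolding h_def f(2)[symmetric] by (rule inv_into_f_f[OF bij_betw_imp_inj_on[OF f(1)] assms(2)])
  have h_edges: "snd H x y \<longleftrightarrow> snd G (h x) (h y)" if "x \<in> fst H" "y \<in> fst H" for x y
  proof -
    have "f ` fst G = fst H" using f(1) by (rule bij_betw_imp_surj_on)
    then have "h x \<in> fst G" "f (h x) = x" "h y \<in> fst G" "f (h y) = y"
      unfolding h_def using that by (auto intro!: inv_into_into f_inv_into_f)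
    then show ?thesis using f(3) by metis
  qed
  show ?thesis unfolding rooted_iso_def using h_bij h_root h_edges by blast
qed

lemma rooted_iso_trans: "rooted_iso G a H b \<Longrightarrow> rooted_iso H b K c \<Longrightarrow> rooted_iso G a K c"
  unfolding rooted_iso_def
  by (elim exE conjE, rule_tac x = "_ \<circ> _" in exI) (auto intro: bij_betw_trans dest: bij_betwE)

lemma rooted_iso_ball_rep:
  "edges_in A \<Longrightarrow> rooted_iso (ball A a r) a (ball (fst (rep A a)) (to_nat a) r) (to_nat a)"
  using rooted_iso_map_graph[OF inj_to_nat] by (simp add: ball_rep)

lemma balls_iso_rep:
  assumes "edges_in A" "a \<in> fst A" "edges_in B" "b \<in> fst B"
  shows "balls_iso (fst (rep A a)) (snd (rep A a)) (fst (rep B b)) (snd (rep B b)) r \<longleftrightarrow> balls_iso A a B b r"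
proof -
  note iso_A = rooted_iso_ball_rep[OF assms(1), of a r]
    and iso_B = rooted_iso_ball_rep[OF assms(3), of b r]
  have iso_A': "rooted_iso (ball (fst (rep A a)) (to_nat a) r) (to_nat a) (ball A a r) a"
    using rooted_iso_sym[OF iso_A root_in_ball[OF assms(2)]] .
  have iso_B': "rooted_iso (ball (fst (rep B b)) (to_nat b) r) (to_nat b) (ball B b r) b"
    using rooted_iso_sym[OF iso_B root_in_ball[OF assms(4)]] .
  show ?thesis
    unfolding balls_iso_def snd_rep
    by (meson iso_A iso_A' iso_B iso_B' rooted_iso_trans)
qed

lemma rdist_rep:
  assumes "edges_in A" "a \<in> fst A" "edges_in B" "b \<in> fst B"
  shows "rdist (fst (rep A a)) (snd (rep A a)) (fst (rep B b)) (snd (rep B b)) = rdist A a B b"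
  unfolding rdist_def balls_iso_rep[OF assms] ..

lemma rdist_sym:
  assumes "a \<in> fst A" "b \<in> fst B"
  shows "rdist A a B b = rdist B b A a"
proof -
  have "balls_iso A a B b r \<longleftrightarrow> balls_iso B b A a r" for r
    unfolding balls_iso_def using assms root_in_ball rooted_iso_sym by metis
  then have "balls_iso A a B b = balls_iso B b A a" by blast
  then show ?thesis unfolding rdist_def by simp
qed

lemma rep_in_Gstar:
  assumes "simple_graph A" "locally_finite A" "a \<in> fst A"
  shows "rep A a \<in> Gstar"
proof -
  let ?C = "component A a"
  let ?M = "map_graph to_nat ?C"
  have edges: "edges_in ?C"
    using assms(1) by (intro edges_in_component simple_graph_imp_edges_in)
  have vertices_C: "fst ?C = comp_set A a"
    using comp_set_subset[OF simple_graph_imp_edges_in[OF assms(1)] assms(3)]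
    by (auto simp: component_def induced_def)
  have "simple_graph ?M"
    using assms(1) unfolding simple_graph_def map_graph_def component_def induced_def
    by (auto simp: inj_eq)
  moreover have "locally_finite ?M"
    unfolding locally_finite_def
  proof
    fix x assume "x \<in> fst ?M"
    then obtain a' where a': "a' \<in> fst ?C" "x = to_nat a'" by (auto simp: map_graph_def)
    have "{y. snd ?M x y} \<subseteq> to_nat ` {y. snd A a' y}"
      using a' by (auto simp: map_graph_def component_def induced_def)
    moreover have "finite {y. snd A a' y}"
      using assms(2) a'(1) by (auto simp: locally_finite_def component_def induced_def)
    ultimately show "finite {y. snd ?M x y}" by (meson finite_imageI finite_subset)
  qed
  moreover have "to_nat a \<in> fst ?M"
    using vertices_C root_in_ball_set[of a A 0] ball_set_subset_comp_set[of A a 0]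
    by (auto simp: map_graph_def)
  moreover have "fst ?M = comp_set ?M (to_nat a)"
  proof -
    have "comp_set ?M (to_nat a) = to_nat ` comp_set ?C a"
      unfolding comp_set_def ball_set_map_graph[OF inj_to_nat edges] by blast
    then show ?thesis using vertices_C comp_set_component[of A a] by (simp add: map_graph_def)
  qed
  ultimately show ?thesis unfolding Gstar_def rep_def mem_Collect_eq prod.case by (intro conjI)
qed

lemma bounded_continuous_Gstar_tendsto:
  assumes "bounded_continuous_Gstar f" "x \<in> Gstar" "\<forall>n. y n \<in> Gstar"
    and "(\<lambda>n. rdist (fst x) (snd x) (fst (y n)) (snd (y n))) \<longlonglongrightarrow> 0"
  shows "(\<lambda>n. f (y n)) \<longlonglongrightarrow> f x"
  unfolding tendsto_iff
proof (intro allI impI)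
  fix e :: real assume "e > 0"
  have "\<forall>x \<in> Gstar. \<forall>e > 0. \<exists>d > 0. \<forall>y' \<in> Gstar.
          rdist (fst x) (snd x) (fst y') (snd y') < d \<longrightarrow> \<bar>f x - f y'\<bar> < e"
    using assms(1) unfolding bounded_continuous_Gstar_def by (auto simp: case_prod_unfold)
  then obtain d where "d > 0"
    and d: "\<forall>y' \<in> Gstar. rdist (fst x) (snd x) (fst y') (snd y') < d \<longrightarrow> \<bar>f x - f y'\<bar> < e"
    using assms(2) \<open>e > 0\<close> by blast
  have "eventually (\<lambda>n. rdist (fst x) (snd x) (fst (y n)) (snd (y n)) < d) sequentially"
    using assms(4) \<open>d > 0\<close> by (rule order_tendstoD(2))
  then show "eventually (\<lambda>n. dist (f (y n)) (f x) < e) sequentially"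
    by (rule eventually_mono) (use d assms(3) in \<open>auto simp: dist_real_def abs_minus_commute\<close>)
qed

lemma bounded_continuous_Gstar_tendsto_rep:
  assumes "bounded_continuous_Gstar f"
    and "\<And>n. simple_graph (H n)" "\<And>n. finite (fst (H n))" "\<And>n. s n \<in> fst (H n)"
    and "simple_graph K" "locally_finite K" "k \<in> fst K"
    and "(\<lambda>n. rdist (H n) (s n) K k) \<longlonglongrightarrow> 0"
  shows "(\<lambda>n. f (rep (H n) (s n))) \<longlonglongrightarrow> f (rep K k)"
proof (rule bounded_continuous_Gstar_tendsto[OF assms(1)])
  show "rep K k \<in> Gstar" using assms(5-7) by (rule rep_in_Gstar)
  show "\<forall>n. rep (H n) (s n) \<in> Gstar"
    using assms(2-4) by (blast intro: rep_in_Gstar locally_finite_if_finite simple_graph_imp_edges_in)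
  have "rdist (fst (rep K k)) (snd (rep K k)) (fst (rep (H n) (s n))) (snd (rep (H n) (s n)))
        = rdist (H n) (s n) K k" for n
    using assms(2,4,5,7)
    by (simp only: rdist_rep simple_graph_imp_edges_in rdist_sym[of k K "s n" "H n"])
  then show "(\<lambda>n. rdist (fst (rep K k)) (snd (rep K k)) (fst (rep (H n) (s n))) (snd (rep (H n) (s n))))
             \<longlonglongrightarrow> 0"
    using assms(8) by simp
qed

lemma eventually_ball_of_eventually_selections:
  assumes nonempty: "\<And>n. A n \<noteq> {}"
    and selections: "\<And>s. \<forall>n. s n \<in> A n \<Longrightarrow> eventually (\<lambda>n. P n (s n)) sequentially"
  shows "eventually (\<lambda>n. \<forall>a \<in> A n. P n a) sequentially"
proof -
  \<comment> \<open>A selection that picks a counterexample whenever there is one.\<close>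
  define s where "s n = (SOME a. a \<in> A n \<and> (\<not> P n a \<or> (\<forall>a' \<in> A n. P n a')))" for n
  have s: "s n \<in> A n \<and> (\<not> P n (s n) \<or> (\<forall>a \<in> A n. P n a))" for n
    unfolding s_def by (rule someI_ex) (use nonempty[of n] in blast)
  have "eventually (\<lambda>n. P n (s n)) sequentially"
    using s by (intro selections) blast
  then show ?thesis
    by (rule eventually_mono) (use s in blast)
qed

lemma tendsto_expectation_pmf_of_set_Times:
  fixes g :: "nat \<Rightarrow> 'a \<times> 'b \<Rightarrow> real" and F :: "'a \<Rightarrow> real"
  assumes "finite V" "V \<noteq> {}" "\<And>n. finite (L n)" "\<And>n. L n \<noteq> {}"
    and fibres: "\<And>v e. v \<in> V \<Longrightarrow> e > 0 \<Longrightarrow>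
                   eventually (\<lambda>n. \<forall>b \<in> L n. \<bar>g n (v, b) - F v\<bar> < e) sequentially"
  shows "(\<lambda>n. measure_pmf.expectation (pmf_of_set (V \<times> L n)) (g n))
           \<longlonglongrightarrow> measure_pmf.expectation (pmf_of_set V) F"
proof -
  have fin: "finite (V \<times> L n)" and card_pos: "real (card (V \<times> L n)) > 0" for n
    using assms(1-4) by (auto simp: card_gt_0_iff)
  have average_F: "(\<Sum>x \<in> V \<times> L n. F (fst x)) / card (V \<times> L n) = (\<Sum>v \<in> V. F v) / card V" for n
  proof -
    have "(\<Sum>x \<in> V \<times> L n. F (fst x)) = real (card (L n)) * (\<Sum>v \<in> V. F v)"
      by (simp add: sum.cartesian_product' sum_distrib_right mult.commute)
    moreover have "card (L n) \<noteq> 0" using assms(3,4) by simp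
    ultimately show ?thesis by (simp add: card_cartesian_product)
  qed
  show ?thesis
    unfolding tendsto_iff
  proof (intro allI impI)
    fix e :: real assume "e > 0"
    then have "eventually (\<lambda>n. \<forall>v \<in> V. \<forall>b \<in> L n. \<bar>g n (v, b) - F v\<bar> < e / 2) sequentially"
      by (intro eventually_ball_finite[OF assms(1)] ballI fibres) auto
    then show "eventually (\<lambda>n. dist (measure_pmf.expectation (pmf_of_set (V \<times> L n)) (g n))
                                   (measure_pmf.expectation (pmf_of_set V) F) < e) sequentially"
    proof (rule eventually_mono)
      fix n assume close: "\<forall>v \<in> V. \<forall>b \<in> L n. \<bar>g n (v, b) - F v\<bar> < e / 2"
      let ?S = "V \<times> L n"
      have "\<bar>\<Sum>x \<in> ?S. g n x - F (fst x)\<bar> \<le> (\<Sum>x \<in> ?S. \<bar>g n x - F (fst x)\<bar>)"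
        by (rule sum_abs)
      also have "\<dots> \<le> real (card ?S) * (e / 2)"
        by (rule sum_bounded_above) (use close in \<open>auto intro: less_imp_le\<close>)
      finally have "\<bar>(\<Sum>x \<in> ?S. g n x - F (fst x)) / card ?S\<bar> \<le> e / 2"
        using card_pos[of n] by (simp add: abs_divide divide_le_eq mult.commute)
      moreover have "measure_pmf.expectation (pmf_of_set ?S) (g n) - measure_pmf.expectation (pmf_of_set V) F
                     = (\<Sum>x \<in> ?S. g n x - F (fst x)) / card ?S"
        using fin[of n] assms(1,2,4)
        by (simp add: integral_pmf_of_set average_F[of n, symmetric] sum_subtractf diff_divide_distrib)
      ultimately show "dist (measure_pmf.expectation (pmf_of_set ?S) (g n))
                            (measure_pmf.expectation (pmf_of_set V) F) < e"
        using \<open>e > 0\<close> unfolding dist_real_def by linarith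
    qed
  qed
qed

lemma simple_graph_base_graph: "simple_graph G \<Longrightarrow> simple_graph (base_graph G)"
  unfolding simple_graph_def base_graph_def by (auto simp: image_iff)

lemma two_lift_vertices: "two_lift H H' \<Longrightarrow> fst H' = {lift_vertex x b | x b. x \<in> fst H}"
  unfolding two_lift_def by (elim exE conjE) simp

lemma two_lift_simple_graph:
  assumes "two_lift H H'" "simple_graph H"
  shows "simple_graph H'"
proof -
  obtain s where s: "\<forall>x y. s x y = s y x" and H': "H' = ({lift_vertex x b | x b. x \<in> fst H},
           \<lambda>p q. p \<in> {lift_vertex x b | x b. x \<in> fst H} \<and>
                 q \<in> {lift_vertex x b | x b. x \<in> fst H} \<and>
                 snd H (unlift p) (unlift q) \<and>
                 (hd (snd q) = (hd (snd p) \<noteq> s (unlift p) (unlift q))))"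
    using assms(1) unfolding two_lift_def by blast
  have symmetric: "\<forall>x y. snd H x y \<longrightarrow> snd H y x" and loopless: "\<forall>x. \<not> snd H x x"
    using assms(2) unfolding simple_graph_def by blast+
  have "\<forall>p q. snd H' p q \<longrightarrow> p \<in> fst H' \<and> q \<in> fst H'"
    by (simp add: H')
  moreover have "\<forall>p q. snd H' p q \<longrightarrow> snd H' q p"
  proof (intro allI impI)
    fix p q assume edge: "snd H' p q"
    then have "snd H (unlift p) (unlift q)" by (simp add: H')
    then have "snd H (unlift q) (unlift p)" using symmetric by blast
    moreover have "s (unlift q) (unlift p) = s (unlift p) (unlift q)" using s by blast
    ultimately show "snd H' q p" using edge by (simp add: H') blast
  qed
  moreover have "\<forall>p. \<not> snd H' p p"
  proof
    fix p show "\<not> snd H' p p" using loopless[rule_format, of "unlift p"] by (simp add: H')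
  qed
  ultimately show ?thesis unfolding simple_graph_def by blast
qed

lemma iterated_two_lifts:
  assumes "simple_graph G" "Gs 0 = base_graph G" "\<forall>n. two_lift (Gs n) (Gs (Suc n))"
  shows "simple_graph (Gs n) \<and> fst (Gs n) = fst G \<times> {bs. length bs = n}"
proof (induction n)
  case 0
  then show ?case using assms simple_graph_base_graph[OF assms(1)] by (auto simp: base_graph_def)
next
  case (Suc n)
  then have "simple_graph (Gs (Suc n))" "fst (Gs (Suc n)) = {lift_vertex x b | x b. x \<in> fst (Gs n)}"
    using assms(3) two_lift_simple_graph two_lift_vertices by blast+
  moreover have "{lift_vertex x b | x b. x \<in> fst G \<times> {bs. length bs = n}} = fst G \<times> {bs. length bs = Suc n}"
    by (auto simp: lift_vertex_def length_Suc_conv)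
  ultimately show ?case using Suc by simp
qed

lemma simple_graph_nb_tree: "simple_graph (nb_tree G v)"
  unfolding simple_graph_def nb_tree_def by auto

lemma root_in_nb_tree: "v \<in> fst G \<Longrightarrow> [v] \<in> fst (nb_tree G v)"
  unfolding nb_tree_def nb_walk_def by simp

lemma locally_finite_nb_tree:
  assumes "edges_in G" "finite (fst G)"
  shows "locally_finite (nb_tree G v)"
  unfolding locally_finite_def
proof
  fix p assume "p \<in> fst (nb_tree G v)"
  have "{q. snd (nb_tree G v) p q} \<subseteq> (\<lambda>x. p @ [x]) ` fst G \<union> {butlast p}"
  proof
    fix q assume "q \<in> {q. snd (nb_tree G v) p q}"
    then have walks: "nb_walk G v p" "nb_walk G v q" and "(\<exists>x. q = p @ [x]) \<or> (\<exists>x. p = q @ [x])"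
      unfolding nb_tree_def by auto
    then consider x where "q = p @ [x]" | "q = butlast p" by auto
    then show "q \<in> (\<lambda>x. p @ [x]) ` fst G \<union> {butlast p}"
    proof cases
      case (1 x)
      have "p \<noteq> []" using walks(1) by (simp add: nb_walk_def)
      then have "Suc (length p - 1) < length q" "q ! Suc (length p - 1) = x"
        using 1 by (auto simp: nth_append)
      then have "snd G (q ! (length p - 1)) x" using walks(2) unfolding nb_walk_def by metis
      then show ?thesis using 1 assms(1) unfolding edges_in_def by blast
    qed simp
  qed
  then show "finite {q. snd (nb_tree G v) p q}"
    by (rule finite_subset) (simp add: assms(2))
qed

theorem proposition4p13:
  fixes G :: "'v::countable ugraph"
    and Gs :: "nat \<Rightarrow> ('v \<times> bool list) ugraph"
  assumes "simple_graph G"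
    and "finite (fst G)"
    and "fst G \<noteq> {}"
    and "Gs 0 = base_graph G"
    and "\<forall>n. two_lift (Gs n) (Gs (Suc n))"
    and "\<forall>v \<in> fst G. \<forall>s. (\<forall>n. s n \<in> fst (Gs n) \<and> fst (s n) = v) \<longrightarrow>
           (\<lambda>n. rdist (Gs n) (s n) (nb_tree G v) [v]) \<longlonglongrightarrow> 0"
  shows "local_weak_conv Gs (map_pmf (\<lambda>v. rep (nb_tree G v) [v]) (pmf_of_set (fst G)))"
  unfolding local_weak_conv_def
proof (intro allI impI)
  fix f assume f: "bounded_continuous_Gstar f"
  define L where "L n = {bs :: bool list. length bs = n}" for n
  have lifts: "simple_graph (Gs n)" "fst (Gs n) = fst G \<times> L n" for n
    using iterated_two_lifts[OF assms(1,4,5)] unfolding L_def by blast+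
  have L: "finite (L n)" "L n \<noteq> {}" for n
    unfolding L_def by (rule finite_list_length) (metis empty_iff length_replicate mem_Collect_eq)
  have fibres: "eventually (\<lambda>n. \<forall>bs \<in> L n. \<bar>f (rep (Gs n) (v, bs)) - f (rep (nb_tree G v) [v])\<bar> < e) sequentially"
    if "v \<in> fst G" "e > 0" for v e
  proof (rule eventually_ball_of_eventually_selections[OF L(2)])
    fix s assume "\<forall>n. s n \<in> L n"
    then have "(\<lambda>n. f (rep (Gs n) (v, s n))) \<longlonglongrightarrow> f (rep (nb_tree G v) [v])"
      using that(1) assms(1,2,6) lifts L(1)
      by (intro bounded_continuous_Gstar_tendsto_rep[OF f])
         (auto simp: simple_graph_nb_tree locally_finite_nb_tree simple_graph_imp_edges_in root_in_nb_tree)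
    then show "eventually (\<lambda>n. \<bar>f (rep (Gs n) (v, s n)) - f (rep (nb_tree G v) [v])\<bar> < e) sequentially"
      using that(2) by (auto dest: tendstoD simp: dist_real_def)
  qed
  show "(\<lambda>n. measure_pmf.expectation (U_law (Gs n)) f)
        \<longlonglongrightarrow> measure_pmf.expectation (map_pmf (\<lambda>v. rep (nb_tree G v) [v]) (pmf_of_set (fst G))) f"
    unfolding U_law_def lifts(2) integral_map_pmf
    using tendsto_expectation_pmf_of_set_Times[OF assms(2,3) L fibres] by (simp add: o_def)
qed

end
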